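(* Let $\gamma>0$, $W,V\in C_{p,\gamma}^{0}(\mathbb{R})$ (possibly complex-valued), $\mathscr{L}\psi:=-\psi''+W\psi'+V\psi$, and for $\lambda\in\mathbb{R}$ let $\mathcal{E}(\lambda):=\{\psi\in C_{p}^{2}(\mathbb{R}) : \mathscr{L}\psi=\lambda\psi\}$. Then: - if $\lambda\in\sigma_{g}^{1}(\mathscr{L})$, then $\mathcal{E}(\lambda)=\{e^{\mathrm{i}k_{0}x}p(x) : \mathcal{D}^{k_{0}}p=\lambda p,\ p\in C_{p,\gamma}^{2}(\mathbb{R})\}$, where $\mathcal{A}(\lambda)=\{[k_{0}]_{\gamma}\}$; - if $\lambda\in\sigma_{g}^{2}(\mathscr{L})$, then $\mathcal{E}(\lambda)=\{e^{\mathrm{i}k_{0}x}(p_{1}(x)+xp_{2}(x)) : \mathcal{D}^{k_{0}}p_{2}=\lambda p_{2},\ \mathcal{D}^{k_{0}}p_{1}=\lambda p_{1}+(2\mathrm{i}k_{0}-W)p_{2}+2p_{2}',\ p_{1},p_{2}\in C_{p,\gamma}^{2}(\mathbb{R})\}$; - if $\lambda\in\sigma_{g}^{3}(\mathscr{L})$, then $\mathcal{E}(\lambda)=\operatorname{span}\{e^{\mathrm{i}kx}p(x) : \mathcal{D}^{k}p=\lambda p,\ [k]_{\gamma}\in\mathcal{A}(\lambda),\ |\mathcal{A}(\lambda)|=2,\ p\in C_{p,\gamma}^{2}(\mathbb{R})\}$.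
   Context: $C_{p}^{0}(I)$: integrable piecewise-continuous functions on $I$ (finitely many discontinuities on each finite subinterval, one-sided improper integrals of $|f|$ converging at each discontinuity); $C_{p}^{l}(I)$: differentiable functions with derivative in $C_{p}^{l-1}(I)$; $C_{p,\gamma}^{l}(\mathbb{R})$: $\gamma$-periodic functions in $C_{p}^{l}(\mathbb{R})$; $[k]_{\gamma}=\{k+2m\pi/\gamma:m\in\mathbb{Z}\}$ for $k\in\mathbb{C}$. Every solution in $C_p^2(\mathbb{R})$ of $\mathscr{L}\psi=\lambda\psi$ has one of the forms (a) $e^{\mathrm{i}k_0x}p(x)$, (b) $e^{\mathrm{i}k_0x}(p_1(x)+xp_2(x))$ with $p_2\not\equiv0$, (c) $e^{\mathrm{i}k_1x}p_1(x)+e^{\mathrm{i}k_2x}p_2(x)$ with $[k_1]_\gamma\ne[k_2]_\gamma$, where $k_0,k_1,k_2\in\mathbb{C}$ and $p,p_1,p_2\in C^2_{p,\gamma}(\mathbb{R})$; the exponents $k$ are called quasimomenta, and $\mathcal{A}(\lambda)$ is the set of congruence classes modulo $2\pi/\gamma$ of quasimomenta of solutions corresponding to $\lambda$ (it has at most two elements; in cases (a),(b) $\mathcal{A}(\lambda)=\{[k_0]_\gamma\}$, in case (c) $\mathcal{A}(\lambda)=\{[k_1]_\gamma,[k_2]_\gamma\}$). $\sigma_{g}^{1}(\mathscr{L})$, $\sigma_{g}^{2}(\mathscr{L})$, $\sigma_{g}^{3}(\mathscr{L})$ are the sets of $\lambda\in\mathbb{R}$ for which $\mathscr{L}\psi=\lambda\psi$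 has a solution $\psi$ of form (a) with $|\mathcal{A}(\lambda)|=1$, of form (b) with $|\mathcal{A}(\lambda)|=1$, and of form (c) with $|\mathcal{A}(\lambda)|=2$, respectively. For $k\in\mathbb{C}$, $\mathcal{D}^{k}:=-\frac{d^{2}}{dx^{2}}+(W-2\mathrm{i}k)\frac{d}{dx}+\mathrm{i}kW+V+k^{2}$. *)

theory Defs
  imports "HOL-Analysis.Analysis" "HOL-Library.Function_Algebras"
begin

definition D1 :: "(real \<Rightarrow> complex) \<Rightarrow> real \<Rightarrow> complex" where
  "D1 f = (\<lambda>x. vector_derivative f (at x))"

(* C_p^0(R): piecewise continuous (discontinuity set finite on every bounded interval),
   with |f| (improperly) integrable on every compact interval *)
definition PC :: "(real \<Rightarrow> complex) \<Rightarrow> bool" where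
  "PC f \<longleftrightarrow> (\<exists>D. (\<forall>a b. finite (D \<inter> {a..b})) \<and> (\<forall>x. x \<notin> D \<longrightarrow> isCont f x)
                \<and> (\<forall>a b. f absolutely_integrable_on {a..b}))"

fun Cp :: "nat \<Rightarrow> (real \<Rightarrow> complex) \<Rightarrow> bool" where
  "Cp 0 f = PC f"
| "Cp (Suc l) f = ((\<forall>x. f differentiable (at x)) \<and> Cp l (D1 f))"

definition Cpg :: "nat \<Rightarrow> real \<Rightarrow> (real \<Rightarrow> complex) \<Rightarrow> bool" where
  "Cpg l \<gamma> f \<longleftrightarrow> Cp l f \<and> (\<forall>x. f (x + \<gamma>) = f x)"

definition cls :: "real \<Rightarrow> complex \<Rightarrow> complex set" where
  "cls \<gamma> k = range (\<lambda>m::int. k + complex_of_real (2 * real_of_int m * pi / \<gamma>))"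

definition Lop :: "(real \<Rightarrow> complex) \<Rightarrow> (real \<Rightarrow> complex) \<Rightarrow> (real \<Rightarrow> complex) \<Rightarrow> real \<Rightarrow> complex" where
  "Lop W V \<psi> = (\<lambda>x. - D1 (D1 \<psi>) x + W x * D1 \<psi> x + V x * \<psi> x)"

definition Dk :: "(real \<Rightarrow> complex) \<Rightarrow> (real \<Rightarrow> complex) \<Rightarrow> complex \<Rightarrow> (real \<Rightarrow> complex) \<Rightarrow> real \<Rightarrow> complex" where
  "Dk W V k p = (\<lambda>x. - D1 (D1 p) x + (W x - 2 * \<i> * k) * D1 p x
                     + (\<i> * k * W x + V x + k ^ 2) * p x)"

definition Eig :: "(real \<Rightarrow> complex) \<Rightarrow> (real \<Rightarrow> complex) \<Rightarrow> real \<Rightarrow> (real \<Rightarrow> complex) set" where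
  "Eig W V lam = {\<psi>. Cp 2 \<psi> \<and> Lop W V \<psi> = (\<lambda>x. complex_of_real lam * \<psi> x)}"

definition formA :: "real \<Rightarrow> complex \<Rightarrow> (real \<Rightarrow> complex) \<Rightarrow> bool" where
  "formA \<gamma> k \<psi> \<longleftrightarrow> (\<exists>p. Cpg 2 \<gamma> p \<and> \<psi> = (\<lambda>x. exp (\<i> * k * complex_of_real x) * p x))"

definition formB :: "real \<Rightarrow> complex \<Rightarrow> (real \<Rightarrow> complex) \<Rightarrow> bool" where
  "formB \<gamma> k \<psi> \<longleftrightarrow> (\<exists>p1 p2. Cpg 2 \<gamma> p1 \<and> Cpg 2 \<gamma> p2 \<and> p2 \<noteq> (\<lambda>x. 0) \<and>
      \<psi> = (\<lambda>x. exp (\<i> * k * complex_of_real x) * (p1 x + complex_of_real x * p2 x)))"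

definition formC :: "real \<Rightarrow> complex \<Rightarrow> complex \<Rightarrow> (real \<Rightarrow> complex) \<Rightarrow> bool" where
  "formC \<gamma> k1 k2 \<psi> \<longleftrightarrow> (\<exists>p1 p2. Cpg 2 \<gamma> p1 \<and> Cpg 2 \<gamma> p2 \<and> p1 \<noteq> (\<lambda>x. 0) \<and> p2 \<noteq> (\<lambda>x. 0) \<and>
      cls \<gamma> k1 \<noteq> cls \<gamma> k2 \<and>
      \<psi> = (\<lambda>x. exp (\<i> * k1 * complex_of_real x) * p1 x + exp (\<i> * k2 * complex_of_real x) * p2 x))"

definition QM :: "real \<Rightarrow> (real \<Rightarrow> complex) \<Rightarrow> complex set" where
  "QM \<gamma> \<psi> = {k. (\<psi> \<noteq> (\<lambda>x. 0) \<and> formA \<gamma> k \<psi>) \<or> formB \<gamma> k \<psi>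
                 \<or> (\<exists>k'. formC \<gamma> k k' \<psi> \<or> formC \<gamma> k' k \<psi>)}"

definition Aset :: "real \<Rightarrow> (real \<Rightarrow> complex) \<Rightarrow> (real \<Rightarrow> complex) \<Rightarrow> real \<Rightarrow> complex set set" where
  "Aset \<gamma> W V lam = cls \<gamma> ` (\<Union>\<psi>\<in>Eig W V lam. QM \<gamma> \<psi>)"

definition sigma1 :: "real \<Rightarrow> (real \<Rightarrow> complex) \<Rightarrow> (real \<Rightarrow> complex) \<Rightarrow> real set" where
  "sigma1 \<gamma> W V = {lam. (\<exists>\<psi>\<in>Eig W V lam. \<psi> \<noteq> (\<lambda>x. 0) \<and> (\<exists>k. formA \<gamma> k \<psi>))
        \<and> \<not> (\<exists>\<psi>\<in>Eig W V lam. \<exists>k. formB \<gamma> k \<psi>) \<and> card (Aset \<gamma> W V lam) = 1}"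

definition sigma2 :: "real \<Rightarrow> (real \<Rightarrow> complex) \<Rightarrow> (real \<Rightarrow> complex) \<Rightarrow> real set" where
  "sigma2 \<gamma> W V = {lam. (\<exists>\<psi>\<in>Eig W V lam. \<exists>k. formB \<gamma> k \<psi>) \<and> card (Aset \<gamma> W V lam) = 1}"

definition sigma3 :: "real \<Rightarrow> (real \<Rightarrow> complex) \<Rightarrow> (real \<Rightarrow> complex) \<Rightarrow> real set" where
  "sigma3 \<gamma> W V = {lam. (\<exists>\<psi>\<in>Eig W V lam. \<exists>k1 k2. formC \<gamma> k1 k2 \<psi>) \<and> card (Aset \<gamma> W V lam) = 2}"

definition cspan :: "(real \<Rightarrow> complex) set \<Rightarrow> (real \<Rightarrow> complex) set" where
  "cspan S = module.span (\<lambda>(c::complex) f x. c * f x) S"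

end

theory Submission
  imports Defs
begin

text \<open>
  Even for piecewise continuous W and V, a solution of psi'' = W psi' + (V - lambda) psi is
  determined by psi(s) and psi'(s): on a short interval |psi| + |psi'| is bounded by a fraction
  of its own maximum. Hence E(lambda) is two-dimensional, linear independence is decided by
  the Wronskian, and translation by the period gamma acts on E(lambda).

  Conjugation by e^{ikx} turns L into D^k. A solution with psi(x + gamma) = e^{ik gamma} psi(x)
  is e^{ikx} p(x) with p periodic, and one with psi(x + gamma) = e^{ik gamma} (psi(x) + gamma eta(x)),
  eta of the first kind, is e^{ikx} (p1(x) + x p2(x)). The three cases are the three shapes of
  the translation operator on E(lambda): in sigma_g^1 it must be scalar, since a Jordan block
  would produce a solution of form (b) and a second eigenvalue a second quasimomentum class; in
  sigma_g^2 a solution of form (b) and its Floquet part e^{ikx} p2 form a basis; in sigma_g^3 the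
  two Floquet components of a solution of form (c) are solutions with distinct multipliers and
  form a basis.
\<close>

section \<open>Piecewise continuous and twice differentiable functions\<close>

lemma PC_continuous: "continuous_on UNIV f \<Longrightarrow> PC f"
  unfolding PC_def
  by (intro exI[of _ "{}"])
     (auto simp: continuous_on_eq_continuous_at intro!: absolutely_integrable_continuous_real
           continuous_at_imp_continuous_on)

lemma PC_add:
  assumes "PC f" "PC g"
  shows "PC (\<lambda>x. f x + g x)"
proof -
  obtain Df where Df: "\<forall>a b. finite (Df \<inter> {a..b})" "\<forall>x. x \<notin> Df \<longrightarrow> isCont f x"
      "\<forall>a b. f absolutely_integrable_on {a..b}"
    using assms(1) unfolding PC_def by blast
  obtain Dg where Dg: "\<forall>a b. finite (Dg \<inter> {a..b})" "\<forall>x. x \<notin> Dg \<longrightarrow> isCont g x"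
      "\<forall>a b. g absolutely_integrable_on {a..b}"
    using assms(2) unfolding PC_def by blast
  show ?thesis
    unfolding PC_def
    by (rule exI[of _ "Df \<union> Dg"])
       (use Df Dg in \<open>auto simp: Int_Un_distrib2 intro: continuous_intros set_integral_add\<close>)
qed

lemma PC_mult_continuous:
  assumes g: "continuous_on UNIV g" and f: "PC f"
  shows "PC (\<lambda>x. g x * f x)"
proof -
  obtain D where D: "\<forall>a b. finite (D \<inter> {a..b})" "\<forall>x. x \<notin> D \<longrightarrow> isCont f x"
      "\<forall>a b. f absolutely_integrable_on {a..b}"
    using f unfolding PC_def by blast
  have "(\<lambda>x. g x * f x) absolutely_integrable_on {a..b}" for a b
  proof (rule absolutely_integrable_bounded_measurable_product[OF bilinear_times])
    have "continuous_on {a..b} g" using g by (rule continuous_on_subset) simp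
    then show "g \<in> borel_measurable (lebesgue_on {a..b})" "bounded (g ` {a..b})"
      by (auto intro: continuous_imp_measurable_on_sets_lebesgue compact_imp_bounded
          compact_continuous_image)
  qed (use D in auto)
  then show ?thesis
    unfolding PC_def using D g
    by (intro exI[of _ D]) (auto intro!: continuous_intros simp: continuous_on_eq_continuous_at)
qed

lemma integrable_on_translate:
  fixes f :: "real \<Rightarrow> 'b::real_normed_vector"
  assumes "f integrable_on {a + c..b + c}"
  shows "(\<lambda>x. f (x + c)) integrable_on {a..b}"
proof -
  obtain I where "(f has_integral I) (cbox (a + c) (b + c))"
    using assms by (auto simp: integrable_on_def)
  from has_integral_affinity'[OF this, of 1 c] show ?thesis
    by (auto simp: integrable_on_def)
qed

lemma PC_translate:
  assumes "PC f"
  shows "PC (\<lambda>x. f (x + c))"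
proof -
  obtain D where D: "\<forall>a b. finite (D \<inter> {a..b})" "\<forall>x. x \<notin> D \<longrightarrow> isCont f x"
      "\<forall>a b. f absolutely_integrable_on {a..b}"
    using assms unfolding PC_def by blast
  have "(\<lambda>x. x - c) ` D \<inter> {a..b} = (\<lambda>x. x - c) ` (D \<inter> {a + c..b + c})" for a b
    by auto
  moreover have "isCont (\<lambda>x. f (x + c)) x" if "x \<notin> (\<lambda>x. x - c) ` D" for x
  proof -
    have "x + c \<notin> D" using that by force
    then show ?thesis
      using D(2) by (intro isCont_o2[where f="\<lambda>x. x + c" and g=f, unfolded o_def]) auto
  qed
  moreover have "(\<lambda>x. f (x + c)) absolutely_integrable_on {a..b}" for a b
    using D(3) unfolding absolutely_integrable_on_def
    by (auto intro: integrable_on_translate[where f=f] integrable_on_translate[where f="\<lambda>x. norm (f x)"])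
  ultimately show ?thesis
    unfolding PC_def using D(1) by (intro exI[of _ "(\<lambda>x. x - c) ` D"]) auto
qed

lemma D1_eq:
  assumes "\<And>x. (f has_vector_derivative f' x) (at x)"
  shows "D1 f = f'"
  using vector_derivative_at assms by (auto simp: D1_def fun_eq_iff)

lemma Cp2_iff:
  "Cp 2 f \<longleftrightarrow> (\<forall>x. f differentiable (at x)) \<and> (\<forall>x. D1 f differentiable (at x)) \<and> PC (D1 (D1 f))"
  by (simp add: numeral_2_eq_2)

lemma Cp2_intro:
  assumes "\<And>x. (f has_vector_derivative f1 x) (at x)" "\<And>x. (f1 has_vector_derivative f2 x) (at x)"
    and "PC f2"
  shows "Cp 2 f" "D1 f = f1" "D1 (D1 f) = f2"
proof -
  show d1: "D1 f = f1" by (rule D1_eq[OF assms(1)])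
  show "D1 (D1 f) = f2" unfolding d1 by (rule D1_eq[OF assms(2)])
  then show "Cp 2 f"
    unfolding Cp2_iff d1 using assms by (auto simp: differentiable_def has_vector_derivative_def)
qed

lemma Cp2_D:
  assumes "Cp 2 f"
  shows "(f has_vector_derivative D1 f x) (at x)" "(D1 f has_vector_derivative D1 (D1 f) x) (at x)"
    and "PC (D1 (D1 f))" "continuous_on UNIV f" "continuous_on UNIV (D1 f)"
proof -
  have diff: "\<forall>x. f differentiable (at x)" "\<forall>x. D1 f differentiable (at x)" "PC (D1 (D1 f))"
    using assms unfolding Cp2_iff by auto
  have df: "(f has_vector_derivative D1 f x) (at x)" for x
    using diff(1) vector_derivative_works unfolding D1_def by blast
  have ddf: "(D1 f has_vector_derivative D1 (D1 f) x) (at x)" for x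
    using diff(2) vector_derivative_works unfolding D1_def[of "D1 f"] by blast
  show "(f has_vector_derivative D1 f x) (at x)" "(D1 f has_vector_derivative D1 (D1 f) x) (at x)"
    by (fact df ddf)+
  show "PC (D1 (D1 f))" by (fact diff(3))
  show "continuous_on UNIV f" "continuous_on UNIV (D1 f)"
    using df ddf by (auto intro: continuous_on_vector_derivative)
qed

lemma Cp2_mult:
  assumes g: "\<And>x. (g has_vector_derivative g1 x) (at x)" "\<And>x. (g1 has_vector_derivative g2 x) (at x)"
    and "continuous_on UNIV g2" and q: "Cp 2 q"
  shows "Cp 2 (\<lambda>x. g x * q x)" "D1 (\<lambda>x. g x * q x) = (\<lambda>x. g1 x * q x + g x * D1 q x)"
    and "D1 (D1 (\<lambda>x. g x * q x)) = (\<lambda>x. g2 x * q x + 2 * (g1 x * D1 q x) + g x * D1 (D1 q) x)"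
proof -
  note q' = Cp2_D[OF q]
  have "continuous_on UNIV g" "continuous_on UNIV g1"
    using g by (auto intro: continuous_on_vector_derivative)
  then have pc: "PC (\<lambda>x. g2 x * q x + 2 * (g1 x * D1 q x) + g x * D1 (D1 q) x)"
    using assms(3) q' PC_continuous[OF q'(4)] PC_continuous[OF q'(5)]
    by (intro PC_add PC_mult_continuous continuous_intros)
  have "((\<lambda>x. g x * q x) has_vector_derivative (g1 x * q x + g x * D1 q x)) (at x)" for x
    by (rule has_vector_derivative_eq_rhs[OF has_vector_derivative_mult[OF g(1) q'(1)]])
       (simp add: algebra_simps)
  moreover have "((\<lambda>x. g1 x * q x + g x * D1 q x) has_vector_derivative
      (g2 x * q x + 2 * (g1 x * D1 q x) + g x * D1 (D1 q) x)) (at x)" for x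
    by (rule has_vector_derivative_eq_rhs[OF has_vector_derivative_add[OF
          has_vector_derivative_mult[OF g(2) q'(1)] has_vector_derivative_mult[OF g(1) q'(2)]]])
       (simp add: algebra_simps)
  ultimately show "Cp 2 (\<lambda>x. g x * q x)" "D1 (\<lambda>x. g x * q x) = (\<lambda>x. g1 x * q x + g x * D1 q x)"
    "D1 (D1 (\<lambda>x. g x * q x)) = (\<lambda>x. g2 x * q x + 2 * (g1 x * D1 q x) + g x * D1 (D1 q) x)"
    using pc by (rule Cp2_intro; assumption)+
qed

lemma Cp2_lin:
  assumes f: "Cp 2 f" and g: "Cp 2 g"
  shows "Cp 2 (\<lambda>x. a * f x + b * g x)" "D1 (\<lambda>x. a * f x + b * g x) = (\<lambda>x. a * D1 f x + b * D1 g x)"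
    and "D1 (D1 (\<lambda>x. a * f x + b * g x)) = (\<lambda>x. a * D1 (D1 f) x + b * D1 (D1 g) x)"
proof -
  note f' = Cp2_D[OF f] and g' = Cp2_D[OF g]
  have "((\<lambda>x. a * f x + b * g x) has_vector_derivative (a * D1 f x + b * D1 g x)) (at x)"
    and "((\<lambda>x. a * D1 f x + b * D1 g x) has_vector_derivative
           (a * D1 (D1 f) x + b * D1 (D1 g) x)) (at x)" for x
    by (intro has_vector_derivative_add has_vector_derivative_mult_right f' g')+
  moreover have "PC (\<lambda>x. a * D1 (D1 f) x + b * D1 (D1 g) x)"
    by (intro PC_add PC_mult_continuous f' g' continuous_intros)
  ultimately show "Cp 2 (\<lambda>x. a * f x + b * g x)"
    "D1 (\<lambda>x. a * f x + b * g x) = (\<lambda>x. a * D1 f x + b * D1 g x)"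
    "D1 (D1 (\<lambda>x. a * f x + b * g x)) = (\<lambda>x. a * D1 (D1 f) x + b * D1 (D1 g) x)"
    by (rule Cp2_intro; assumption)+
qed

lemma has_vector_derivative_translate:
  assumes "(f has_vector_derivative d) (at (x + c))"
  shows "((\<lambda>x. f (x + c)) has_vector_derivative d) (at x)"
proof -
  have "((\<lambda>x. x + c) has_vector_derivative 1) (at x)"
    by (auto intro!: derivative_eq_intros simp: has_real_derivative_iff_has_vector_derivative[symmetric])
  from vector_diff_chain_at[OF this assms] show ?thesis by (simp add: o_def)
qed

lemma Cp2_translate:
  assumes f: "Cp 2 f"
  shows "Cp 2 (\<lambda>x. f (x + c))" "D1 (\<lambda>x. f (x + c)) = (\<lambda>x. D1 f (x + c))"
    and "D1 (D1 (\<lambda>x. f (x + c))) = (\<lambda>x. D1 (D1 f) (x + c))"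
proof -
  note f' = Cp2_D[OF f]
  have "((\<lambda>x. f (x + c)) has_vector_derivative D1 f (x + c)) (at x)"
    and "((\<lambda>x. D1 f (x + c)) has_vector_derivative D1 (D1 f) (x + c)) (at x)" for x
    by (intro has_vector_derivative_translate f')+
  moreover have "PC (\<lambda>x. D1 (D1 f) (x + c))" by (intro PC_translate f')
  ultimately show "Cp 2 (\<lambda>x. f (x + c))" "D1 (\<lambda>x. f (x + c)) = (\<lambda>x. D1 f (x + c))"
    "D1 (D1 (\<lambda>x. f (x + c))) = (\<lambda>x. D1 (D1 f) (x + c))"
    by (rule Cp2_intro; assumption)+
qed

section \<open>Plane waves and the operators D^k\<close>

definition plane_wave :: "complex \<Rightarrow> real \<Rightarrow> complex" where
  "plane_wave k x = exp (\<i> * k * complex_of_real x)"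

lemma plane_wave_nonzero [simp]: "plane_wave k x \<noteq> 0"
  by (simp add: plane_wave_def)

lemma plane_wave_add: "plane_wave k (x + y) = plane_wave k x * plane_wave k y"
  by (simp add: plane_wave_def distrib_left exp_add)

lemma plane_wave_mult: "plane_wave k x * plane_wave k' x = plane_wave (k + k') x"
  by (simp add: plane_wave_def distrib_left distrib_right exp_add)

lemma plane_wave_neg: "plane_wave (-k) x * plane_wave k x = 1"
  using plane_wave_mult[of "-k" x k] by (simp add: plane_wave_def)

lemma plane_wave_mult_eq_0_iff [simp]:
  "(\<lambda>x. plane_wave k x * p x) = (\<lambda>x. 0) \<longleftrightarrow> p = (\<lambda>x. 0)"
  by (simp add: fun_eq_iff)

lemma plane_wave_cancel: "plane_wave k x * (plane_wave (-k) x * f x) = f x"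
proof -
  have "plane_wave k x * plane_wave (-k) x = 1"
    using plane_wave_mult[of k x "-k"] by (simp add: plane_wave_def)
  then show ?thesis by (simp add: mult.assoc[symmetric])
qed

lemma plane_wave_has_vector_derivative:
  "(plane_wave k has_vector_derivative (\<i> * k * plane_wave k x)) (at x)"
proof -
  have "((\<lambda>z. exp (\<i> * k * z)) has_field_derivative \<i> * k * exp (\<i> * k * complex_of_real x))
      (at (complex_of_real x))"
    by (auto intro!: derivative_eq_intros)
  from has_vector_derivative_real_field[OF this] show ?thesis
    unfolding plane_wave_def[abs_def] by simp
qed

lemma Cp2_plane_wave_mult:
  assumes "Cp 2 p"
  shows "Cp 2 (\<lambda>x. plane_wave k x * p x)"
    and "D1 (\<lambda>x. plane_wave k x * p x) = (\<lambda>x. plane_wave k x * (D1 p x + \<i> * k * p x))"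
    and "D1 (D1 (\<lambda>x. plane_wave k x * p x)) =
      (\<lambda>x. plane_wave k x * (D1 (D1 p) x + 2 * \<i> * k * D1 p x - k\<^sup>2 * p x))"
proof -
  have d2: "((\<lambda>x. \<i> * k * plane_wave k x) has_vector_derivative (\<i> * k)\<^sup>2 * plane_wave k x) (at x)" for x
    by (rule has_vector_derivative_eq_rhs[OF has_vector_derivative_mult_right[OF
          plane_wave_has_vector_derivative]]) (simp add: power2_eq_square)
  have "continuous_on UNIV (\<lambda>x. (\<i> * k)\<^sup>2 * plane_wave k x)"
    unfolding plane_wave_def by (intro continuous_intros)
  note M = Cp2_mult[OF plane_wave_has_vector_derivative d2 this assms]
  show "Cp 2 (\<lambda>x. plane_wave k x * p x)" by (fact M(1))
  show "D1 (\<lambda>x. plane_wave k x * p x) = (\<lambda>x. plane_wave k x * (D1 p x + \<i> * k * p x))"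
    unfolding M(2) by (simp add: fun_eq_iff algebra_simps)
  show "D1 (D1 (\<lambda>x. plane_wave k x * p x)) =
      (\<lambda>x. plane_wave k x * (D1 (D1 p) x + 2 * \<i> * k * D1 p x - k\<^sup>2 * p x))"
    unfolding M(3) by (simp add: fun_eq_iff algebra_simps power2_eq_square)
qed

lemma Cp2_linear_mult:
  assumes "Cp 2 p"
  shows "Cp 2 (\<lambda>x. complex_of_real x * p x)"
    and "D1 (\<lambda>x. complex_of_real x * p x) = (\<lambda>x. p x + complex_of_real x * D1 p x)"
    and "D1 (D1 (\<lambda>x. complex_of_real x * p x)) = (\<lambda>x. 2 * D1 p x + complex_of_real x * D1 (D1 p) x)"
proof -
  have "((\<lambda>x. complex_of_real x) has_vector_derivative 1) (at x)" for x
    using has_vector_derivative_of_real[OF DERIV_ident] by simp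
  note M = Cp2_mult[OF this has_vector_derivative_const continuous_on_const assms]
  show "Cp 2 (\<lambda>x. complex_of_real x * p x)"
    "D1 (\<lambda>x. complex_of_real x * p x) = (\<lambda>x. p x + complex_of_real x * D1 p x)"
    "D1 (D1 (\<lambda>x. complex_of_real x * p x)) = (\<lambda>x. 2 * D1 p x + complex_of_real x * D1 (D1 p) x)"
    using M by simp_all
qed

lemma Lop_plane_wave_mult:
  assumes "Cp 2 p"
  shows "Lop W V (\<lambda>x. plane_wave k x * p x) = (\<lambda>x. plane_wave k x * Dk W V k p x)"
  unfolding Lop_def Dk_def Cp2_plane_wave_mult(3)[OF assms] unfolding Cp2_plane_wave_mult(2)[OF assms]
  by (simp add: fun_eq_iff algebra_simps power2_eq_square)

lemma Dk_linear_mult: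
  assumes "Cp 2 p1" "Cp 2 p2"
  shows "Dk W V k (\<lambda>x. p1 x + complex_of_real x * p2 x) =
    (\<lambda>x. Dk W V k p1 x + complex_of_real x * Dk W V k p2 x - 2 * D1 p2 x + (W x - 2 * \<i> * k) * p2 x)"
proof -
  note X = Cp2_linear_mult[OF assms(2)]
  note S = Cp2_lin[OF assms(1) X(1), of 1 1, unfolded mult_1]
  show ?thesis
    unfolding Dk_def S(3) unfolding S(2) X(3) unfolding X(2) by (simp add: fun_eq_iff algebra_simps)
qed

lemma Eig_plane_wave_mult_iff:
  assumes "Cp 2 p"
  shows "(\<lambda>x. plane_wave k x * p x) \<in> Eig W V lam \<longleftrightarrow> Dk W V k p = (\<lambda>x. complex_of_real lam * p x)"
proof -
  have "(\<lambda>x. plane_wave k x * Dk W V k p x) = (\<lambda>x. complex_of_real lam * (plane_wave k x * p x)) \<longleftrightarrow>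
        Dk W V k p = (\<lambda>x. complex_of_real lam * p x)"
    by (auto simp: fun_eq_iff algebra_simps)
  then show ?thesis
    unfolding Eig_def using Cp2_plane_wave_mult(1)[OF assms] Lop_plane_wave_mult[OF assms] by simp
qed

lemma Eig_plane_wave_jordan_iff:
  assumes "Cp 2 p1" "Cp 2 p2" and p2: "Dk W V k p2 = (\<lambda>x. complex_of_real lam * p2 x)"
  shows "(\<lambda>x. plane_wave k x * (p1 x + complex_of_real x * p2 x)) \<in> Eig W V lam \<longleftrightarrow>
    Dk W V k p1 = (\<lambda>x. complex_of_real lam * p1 x + (2 * \<i> * k - W x) * p2 x + 2 * D1 p2 x)"
proof -
  have C: "Cp 2 (\<lambda>x. p1 x + complex_of_real x * p2 x)"
    using Cp2_lin(1)[OF assms(1) Cp2_linear_mult(1)[OF assms(2)], of 1 1] by simp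
  have "(Dk W V k p1 x + complex_of_real x * Dk W V k p2 x - 2 * D1 p2 x + (W x - 2 * \<i> * k) * p2 x
        = complex_of_real lam * (p1 x + complex_of_real x * p2 x)) \<longleftrightarrow>
      (Dk W V k p1 x = complex_of_real lam * p1 x + (2 * \<i> * k - W x) * p2 x + 2 * D1 p2 x)" for x
  proof -
    have "Dk W V k p1 x + complex_of_real x * Dk W V k p2 x - 2 * D1 p2 x + (W x - 2 * \<i> * k) * p2 x
          - complex_of_real lam * (p1 x + complex_of_real x * p2 x) =
        Dk W V k p1 x - (complex_of_real lam * p1 x + (2 * \<i> * k - W x) * p2 x + 2 * D1 p2 x)"
      unfolding p2 by (simp add: algebra_simps)
    then show ?thesis by (metis eq_iff_diff_eq_0)
  qed
  then show ?thesis
    unfolding Eig_plane_wave_mult_iff[OF C] Dk_linear_mult[OF assms(1,2)] fun_eq_iff by simp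
qed

section \<open>The solution space\<close>

lemma Eig_iff: "f \<in> Eig W V lam \<longleftrightarrow>
    Cp 2 f \<and> (\<forall>x. D1 (D1 f) x = W x * D1 f x + (V x - complex_of_real lam) * f x)"
  unfolding Eig_def Lop_def by (auto simp: fun_eq_iff algebra_simps)

lemma Eig_Cp2: "f \<in> Eig W V lam \<Longrightarrow> Cp 2 f"
  by (simp add: Eig_def)

lemma Eig_lin:
  assumes "f \<in> Eig W V lam" "g \<in> Eig W V lam"
  shows "(\<lambda>x. a * f x + b * g x) \<in> Eig W V lam"
proof -
  note L = Cp2_lin[OF Eig_Cp2[OF assms(1)] Eig_Cp2[OF assms(2)], of a b]
  have f: "D1 (D1 f) x = W x * D1 f x + (V x - complex_of_real lam) * f x"
   and g: "D1 (D1 g) x = W x * D1 g x + (V x - complex_of_real lam) * g x" for x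
    using assms unfolding Eig_iff by blast+
  have "a * D1 (D1 f) x + b * D1 (D1 g) x =
      W x * (a * D1 f x + b * D1 g x) + (V x - complex_of_real lam) * (a * f x + b * g x)" for x
    unfolding f g by (simp add: algebra_simps)
  then show ?thesis
    unfolding Eig_iff L(3) unfolding L(2) using L(1) by simp
qed

lemma Eig_scale: "f \<in> Eig W V lam \<Longrightarrow> (\<lambda>x. a * f x) \<in> Eig W V lam"
  using Eig_lin[of f W V lam f a 0] by simp

lemma Eig_translate:
  assumes "f \<in> Eig W V lam" "\<And>x. W (x + c) = W x" "\<And>x. V (x + c) = V x"
  shows "(\<lambda>x. f (x + c)) \<in> Eig W V lam"
proof -
  note T = Cp2_translate[OF Eig_Cp2[OF assms(1)], of c]
  have "D1 (D1 f) (x + c) = W x * D1 f (x + c) + (V x - complex_of_real lam) * f (x + c)" for x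
    using assms unfolding Eig_iff by metis
  then show ?thesis
    unfolding Eig_iff T(3) unfolding T(2) using T(1) by simp
qed

interpretation fun_module: module "\<lambda>(c::complex) (f::real \<Rightarrow> complex) x. c * f x"
  by unfold_locales (auto simp: fun_eq_iff algebra_simps)

lemma Eig_subspace: "fun_module.subspace (Eig W V lam)"
proof -
  have "PC (\<lambda>_. 0)" by (rule PC_continuous) simp
  note Z = Cp2_intro[of "\<lambda>_. 0" "\<lambda>_. 0", OF has_vector_derivative_const has_vector_derivative_const this]
  have "0 \<in> Eig W V lam"
    unfolding Eig_iff zero_fun_def Z(3) unfolding Z(2) using Z(1) by simp
  then show ?thesis
    by (intro fun_module.subspaceI)
       (auto simp: plus_fun_def intro: Eig_scale Eig_lin[of _ _ _ _ _ 1 1, simplified])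
qed

section \<open>Uniqueness for the initial value problem\<close>

lemma norm_diff_le_integral_bound:
  fixes F F' :: "real \<Rightarrow> complex" and B :: "real \<Rightarrow> real"
  assumes F: "\<And>t. (F has_vector_derivative F' t) (at t)"
    and bound: "\<And>t. t \<in> {a..b} \<Longrightarrow> norm (F' t) \<le> B t"
    and B: "B integrable_on {a..b}" "\<And>t. t \<in> {a..b} \<Longrightarrow> 0 \<le> B t"
    and s: "s \<in> {a..b}" and x: "x \<in> {a..b}"
  shows "norm (F x - F s) \<le> integral {a..b} B"
proof -
  have "norm (F v - F u) \<le> integral {a..b} B" if uv: "u \<le> v" "u \<in> {a..b}" "v \<in> {a..b}" for u v
  proof -
    have sub: "{u..v} \<subseteq> {a..b}" using uv by auto
    have int: "(F' has_integral (F v - F u)) {u..v}"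
      by (rule fundamental_theorem_of_calculus[OF uv(1)])
         (auto intro: has_vector_derivative_at_within F)
    then have "norm (F v - F u) = norm (integral {u..v} F')"
      by (simp add: integral_unique)
    also have "\<dots> \<le> integral {u..v} B"
      using int sub bound integrable_on_subinterval[OF B(1) sub]
      by (intro integral_norm_bound_integral) auto
    also have "\<dots> \<le> integral {a..b} B"
      using sub B by (intro integral_subset_le integrable_on_subinterval[OF B(1) sub]) auto
    finally show ?thesis .
  qed
  from this[of s x] this[of x s] s x show ?thesis
    by (cases "s \<le> x") (auto simp: norm_minus_commute)
qed

lemma integral_centered_interval_small:
  fixes g :: "real \<Rightarrow> real"
  assumes g: "\<And>a b. g integrable_on {a..b}" and e: "e > 0"
  shows "\<exists>h>0. h < e \<and> integral {s - h..s + h} g < e"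
proof -
  define G where "G x = integral {s - 1..x} g" for x
  have "continuous_on {s - 1..s + 1} G"
    unfolding G_def by (rule indefinite_integral_continuous_1[OF g])
  then have "isCont G s"
    by (rule continuous_on_interior) auto
  then obtain d where d: "d > 0" "\<And>x. dist x s < d \<Longrightarrow> dist (G x) (G s) < e / 2"
    using e unfolding continuous_at_eps_delta by (metis half_gt_zero)
  define h where "h = min (d / 2) (min (e / 2) (1 / 2))"
  have h: "h > 0" "h < d" "h < e" "h < 1"
    using d(1) e by (auto simp: h_def)
  have "integral {s - 1..s - h} g + integral {s - h..s + h} g = integral {s - 1..s + h} g"
    using h g by (intro Henstock_Kurzweil_Integration.integral_combine) auto
  then have "integral {s - h..s + h} g = (G (s + h) - G s) + (G s - G (s - h))"
    unfolding G_def by simp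
  also have "\<dots> < e"
    using d(2)[of "s + h"] d(2)[of "s - h"] h unfolding dist_real_def by arith
  finally show ?thesis using h by blast
qed

lemma Eig_second_derivative_bound:
  assumes "\<psi> \<in> Eig W V lam" "norm (\<psi> t) \<le> M" "norm (D1 \<psi> t) \<le> M"
  shows "norm (D1 (D1 \<psi>) t) \<le> M * (norm (W t) + norm (V t) + norm (complex_of_real lam))"
proof -
  have "norm (D1 (D1 \<psi>) t) \<le> norm (W t) * norm (D1 \<psi> t) + norm (V t - complex_of_real lam) * norm (\<psi> t)"
    using assms(1) unfolding Eig_iff by (metis norm_mult norm_triangle_ineq)
  also have "\<dots> \<le> norm (W t) * M + (norm (V t) + norm (complex_of_real lam)) * M"
    using assms(2,3) by (intro add_mono mult_mono norm_triangle_ineq4) auto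
  finally show ?thesis by (simp add: algebra_simps)
qed

text \<open>With M the maximum of |psi| + |psi'| on [s - h, s + h], integrating psi' and psi'' from s
  gives M <= (2 h + integral of |W| + |V| + |lambda|) M, and the factor is below 1 for small h.\<close>

lemma Eig_vanishing_near_zero_data:
  assumes "PC W" "PC V" and \<psi>: "\<psi> \<in> Eig W V lam" and zero: "\<psi> s = 0" "D1 \<psi> s = 0"
  shows "\<exists>h>0. \<forall>x\<in>{s - h..s + h}. \<psi> x = 0 \<and> D1 \<psi> x = 0"
proof -
  note \<psi>' = Cp2_D[OF Eig_Cp2[OF \<psi>]]
  define g where "g t = norm (W t) + norm (V t) + norm (complex_of_real lam)" for t
  have g_int: "g integrable_on {a..b}" for a b
    using assms(1,2) unfolding g_def PC_def absolutely_integrable_on_def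
    by (intro integrable_add integrable_const_ivl) auto
  obtain h where h: "h > 0" "h < 1/4" and small: "integral {s - h..s + h} g < 1/4"
    using integral_centered_interval_small[OF g_int, of "1/4"] by auto
  let ?I = "{s - h..s + h}"
  have s: "s \<in> ?I" using h by simp
  define u where "u x = norm (\<psi> x) + norm (D1 \<psi> x)" for x
  have "continuous_on ?I u"
    unfolding u_def by (intro continuous_intros continuous_on_subset[OF \<psi>'(4)]
        continuous_on_subset[OF \<psi>'(5)]) auto
  then obtain xm where xm: "xm \<in> ?I" "\<And>y. y \<in> ?I \<Longrightarrow> u y \<le> u xm"
    using continuous_attains_sup[of ?I u] h by fastforce
  define M where "M = u xm"
  have "M \<ge> 0" unfolding M_def u_def by simp
  have M: "norm (\<psi> t) \<le> M" "norm (D1 \<psi> t) \<le> M" if "t \<in> ?I" for t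
    using xm(2)[OF that] unfolding M_def u_def by (smt (verit) norm_ge_zero)+
  have "norm (\<psi> x) \<le> 2 * h * M" if "x \<in> ?I" for x
    using norm_diff_le_integral_bound[OF \<psi>'(1) M(2) integrable_const_ivl _ s that]
      \<open>M \<ge> 0\<close> zero h by auto
  moreover have "norm (D1 \<psi> x) \<le> M * (1/4)" if "x \<in> ?I" for x
  proof -
    have "norm (D1 \<psi> x) \<le> integral ?I (\<lambda>t. M * g t)"
      using norm_diff_le_integral_bound[OF \<psi>'(2) _ integrable_cmul[OF g_int] _ s that]
        Eig_second_derivative_bound[OF \<psi> M] \<open>M \<ge> 0\<close> zero
      unfolding g_def by auto
    also have "\<dots> = M * integral ?I g" by simp
    also have "\<dots> \<le> M * (1/4)"
      using small \<open>M \<ge> 0\<close> by (intro mult_left_mono) auto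
    finally show ?thesis .
  qed
  ultimately have "M \<le> M * (2 * h + 1/4)"
    using xm(1) unfolding M_def u_def by (smt (verit) distrib_left mult.commute)
  moreover have "M * (2 * h + 1/4) \<le> M * (3/4)"
    using h \<open>M \<ge> 0\<close> by (intro mult_left_mono) auto
  ultimately have "u x \<le> 0" if "x \<in> ?I" for x
    using xm(2)[OF that] unfolding M_def by linarith
  then show ?thesis
    using h unfolding u_def by (smt (verit) norm_ge_zero norm_le_zero_iff)
qed

lemma Eig_zero_data_imp_zero:
  assumes "PC W" "PC V" and \<psi>: "\<psi> \<in> Eig W V lam" and "\<psi> s = 0" "D1 \<psi> s = 0"
  shows "\<psi> = (\<lambda>x. 0)"
proof -
  define Z where "Z = {x. \<psi> x = 0 \<and> D1 \<psi> x = 0}"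
  note \<psi>' = Cp2_D[OF Eig_Cp2[OF \<psi>]]
  have "closed Z"
    unfolding Z_def Collect_conj_eq by (intro closed_Int closed_Collect_eq \<psi>' continuous_on_const)
  moreover have "open Z"
  proof (rule openI)
    fix y assume "y \<in> Z"
    then obtain h where "h > 0" "\<forall>x\<in>{y - h..y + h}. \<psi> x = 0 \<and> D1 \<psi> x = 0"
      using Eig_vanishing_near_zero_data[OF assms(1,2) \<psi>] unfolding Z_def by blast
    moreover have "ball y h \<subseteq> {y - h..y + h}" by (auto simp: dist_real_def)
    ultimately show "\<exists>e>0. ball y e \<subseteq> Z" unfolding Z_def by blast
  qed
  moreover have "s \<in> Z" using assms unfolding Z_def by simp
  ultimately have "Z = UNIV" using clopen by blast
  then show ?thesis unfolding Z_def by auto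
qed

definition wronskian :: "(real \<Rightarrow> complex) \<Rightarrow> (real \<Rightarrow> complex) \<Rightarrow> real \<Rightarrow> complex" where
  "wronskian f g x = f x * D1 g x - g x * D1 f x"

lemma wronskian_scale_self: "Cp 2 f \<Longrightarrow> wronskian f (\<lambda>x. c * f x) s = 0"
  using Cp2_lin(2)[of f f c 0] by (simp add: wronskian_def)

lemma cramer_2x2:
  fixes f0 f1 g0 g1 p0 p1 :: "'a::field"
  assumes d: "d = f0 * g1 - g0 * f1" "d \<noteq> 0"
  shows "(p0 * g1 - g0 * p1) / d * f0 + (f0 * p1 - p0 * f1) / d * g0 = p0"
    and "(p0 * g1 - g0 * p1) / d * f1 + (f0 * p1 - p0 * f1) / d * g1 = p1"
proof -
  have "(p0 * g1 - g0 * p1) / d * f0 + (f0 * p1 - p0 * f1) / d * g0 = (p0 * d) / d"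
    unfolding times_divide_eq_left add_divide_distrib[symmetric] by (simp add: d(1) algebra_simps)
  then show "(p0 * g1 - g0 * p1) / d * f0 + (f0 * p1 - p0 * f1) / d * g0 = p0"
    using d(2) by simp
  have "(p0 * g1 - g0 * p1) / d * f1 + (f0 * p1 - p0 * f1) / d * g1 = (p1 * d) / d"
    unfolding times_divide_eq_left add_divide_distrib[symmetric] by (simp add: d(1) algebra_simps)
  then show "(p0 * g1 - g0 * p1) / d * f1 + (f0 * p1 - p0 * f1) / d * g1 = p1"
    using d(2) by simp
qed

lemma Eig_span_if_wronskian_nonzero:
  assumes "PC W" "PC V" and f: "f \<in> Eig W V lam" and g: "g \<in> Eig W V lam"
    and \<psi>: "\<psi> \<in> Eig W V lam" and w: "wronskian f g s \<noteq> 0"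
  shows "\<exists>a b. \<psi> = (\<lambda>x. a * f x + b * g x)"
proof -
  define a where "a = wronskian \<psi> g s / wronskian f g s"
  define b where "b = wronskian f \<psi> s / wronskian f g s"
  define r where "r = (\<lambda>x. a * f x + b * g x)"
  have r: "r \<in> Eig W V lam" "D1 r = (\<lambda>x. a * D1 f x + b * D1 g x)"
    unfolding r_def by (intro Eig_lin f g) (rule Cp2_lin(2)[OF Eig_Cp2[OF f] Eig_Cp2[OF g]])
  define \<rho> where "\<rho> = (\<lambda>x. 1 * \<psi> x + (-1) * r x)"
  have \<rho>: "\<rho> \<in> Eig W V lam" "D1 \<rho> = (\<lambda>x. 1 * D1 \<psi> x + (-1) * D1 r x)"
    unfolding \<rho>_def by (intro Eig_lin \<psi> r) (rule Cp2_lin(2)[OF Eig_Cp2[OF \<psi>] Eig_Cp2[OF r(1)]])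
  have "\<rho> s = 0" "D1 \<rho> s = 0"
    using cramer_2x2[OF wronskian_def w, of "\<psi> s" "D1 \<psi> s"]
    unfolding \<rho>(2) r(2) unfolding \<rho>_def r_def a_def b_def wronskian_def by simp_all
  then have "\<rho> = (\<lambda>x. 0)"
    by (rule Eig_zero_data_imp_zero[OF assms(1,2) \<rho>(1)])
  then have "\<psi> = r" by (simp add: \<rho>_def fun_eq_iff)
  then show ?thesis unfolding r_def by blast
qed

lemma Eig_proportional_if_wronskian_zero:
  assumes "PC W" "PC V" and f: "f \<in> Eig W V lam" and g: "g \<in> Eig W V lam"
    and "f \<noteq> (\<lambda>x. 0)" and w: "wronskian f g s = 0"
  shows "\<exists>c. g = (\<lambda>x. c * f x)"
proof -
  have data: "f s \<noteq> 0 \<or> D1 f s \<noteq> 0"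
    using Eig_zero_data_imp_zero[OF assms(1,2) f] assms(5) by blast
  define c where "c = (if f s \<noteq> 0 then g s / f s else D1 g s / D1 f s)"
  define \<rho> where "\<rho> = (\<lambda>x. 1 * g x + (-c) * f x)"
  have \<rho>: "\<rho> \<in> Eig W V lam" "D1 \<rho> = (\<lambda>x. 1 * D1 g x + (-c) * D1 f x)"
    unfolding \<rho>_def by (intro Eig_lin g f) (rule Cp2_lin(2)[OF Eig_Cp2[OF g] Eig_Cp2[OF f]])
  have "\<rho> s = 0 \<and> D1 \<rho> s = 0"
    using data w unfolding \<rho>(2) unfolding \<rho>_def c_def wronskian_def
    by (auto simp: field_simps)
  then have "\<rho> = (\<lambda>x. 0)"
    using Eig_zero_data_imp_zero[OF assms(1,2) \<rho>(1)] by blast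
  then have "g = (\<lambda>x. c * f x)" by (simp add: \<rho>_def fun_eq_iff)
  then show ?thesis by blast
qed

lemma Eig_eq_cspan_if_wronskian_nonzero:
  assumes "PC W" "PC V" and S: "S \<subseteq> Eig W V lam" "f \<in> S" "g \<in> S"
    and "wronskian f g s \<noteq> 0"
  shows "Eig W V lam = cspan S"
proof (rule antisym)
  show "Eig W V lam \<subseteq> cspan S"
  proof
    fix \<psi> assume "\<psi> \<in> Eig W V lam"
    then obtain a b where "\<psi> = (\<lambda>x. a * f x + b * g x)"
      using Eig_span_if_wronskian_nonzero[OF assms(1,2)] S assms(6) by blast
    then have "\<psi> = (\<lambda>x. a * f x) + (\<lambda>x. b * g x)" by (simp add: fun_eq_iff)
    then show "\<psi> \<in> cspan S"
      unfolding cspan_def using S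
      by (simp add: fun_module.span_add fun_module.span_scale fun_module.span_base)
  qed
  show "cspan S \<subseteq> Eig W V lam"
    unfolding cspan_def by (rule fun_module.span_minimal[OF S(1) Eig_subspace])
qed

section \<open>Floquet solutions\<close>

lemma cls_eq_plane_wave:
  assumes "\<gamma> > 0"
  shows "cls \<gamma> k = {z. plane_wave z \<gamma> = plane_wave k \<gamma>}"
proof -
  have "z = k + complex_of_real (2 * of_int m * pi / \<gamma>) \<longleftrightarrow>
      \<i> * z * complex_of_real \<gamma> = \<i> * k * complex_of_real \<gamma> + of_int (2 * m) * pi * \<i>" for z m
  proof -
    have "\<i> * complex_of_real \<gamma> * (k + complex_of_real (2 * of_int m * pi / \<gamma>)) =
        \<i> * k * complex_of_real \<gamma> + of_int (2 * m) * pi * \<i>"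
      using assms by (simp add: field_simps)
    moreover have "\<i> * z * complex_of_real \<gamma> = \<i> * complex_of_real \<gamma> * z"
      by (simp add: ac_simps)
    ultimately show ?thesis
      using assms by (metis mult_left_cancel complex_i_not_zero mult_eq_0_iff of_real_eq_0_iff
          less_irrefl)
  qed
  then show ?thesis
    unfolding cls_def plane_wave_def exp_eq by (auto simp: eq_commute)
qed

lemma cls_eq_iff:
  assumes "\<gamma> > 0"
  shows "cls \<gamma> k = cls \<gamma> k' \<longleftrightarrow> plane_wave k \<gamma> = plane_wave k' \<gamma>"
  unfolding cls_eq_plane_wave[OF assms] by auto

lemma plane_wave_surj:
  assumes "\<gamma> > 0" "b \<noteq> 0"
  shows "\<exists>k. plane_wave k \<gamma> = b"
proof
  show "plane_wave (Ln b / (\<i> * complex_of_real \<gamma>)) \<gamma> = b"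
    using assms by (simp add: plane_wave_def)
qed

lemma floquet_multiplier_nonzero:
  fixes f :: "'a::group_add \<Rightarrow> 'b::mult_zero"
  assumes "f \<noteq> (\<lambda>x. 0)" "\<And>x. f (x + \<gamma>) = b * f x"
  shows "b \<noteq> 0"
proof
  assume "b = 0"
  then have "f (y - \<gamma> + \<gamma>) = 0" for y using assms(2) by (simp only: mult_zero_left)
  then show False using assms(1) by (auto simp: fun_eq_iff)
qed

lemma floquet_factor:
  assumes "Cp 2 \<psi>" "\<And>x. \<psi> (x + \<gamma>) = plane_wave k \<gamma> * \<psi> x"
  shows "\<exists>p. Cpg 2 \<gamma> p \<and> \<psi> = (\<lambda>x. plane_wave k x * p x)"
proof (intro exI conjI)
  show "\<psi> = (\<lambda>x. plane_wave k x * (plane_wave (-k) x * \<psi> x))"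
    by (simp add: plane_wave_cancel)
  have "plane_wave (-k) (x + \<gamma>) * \<psi> (x + \<gamma>) = plane_wave (-k) x * \<psi> x" for x
    using plane_wave_neg[of k \<gamma>] unfolding assms(2) plane_wave_add
    by (simp add: algebra_simps)
  then show "Cpg 2 \<gamma> (\<lambda>x. plane_wave (-k) x * \<psi> x)"
    unfolding Cpg_def using Cp2_plane_wave_mult(1)[OF assms(1)] by simp
qed

lemma jordan_floquet_factor:
  assumes "Cp 2 \<psi>" "Cp 2 \<eta>"
    and \<eta>: "\<And>x. \<eta> (x + \<gamma>) = plane_wave k \<gamma> * \<eta> x"
    and \<psi>: "\<And>x. \<psi> (x + \<gamma>) = plane_wave k \<gamma> * (\<psi> x + complex_of_real \<gamma> * \<eta> x)"
  shows "\<exists>p1 p2. Cpg 2 \<gamma> p1 \<and> Cpg 2 \<gamma> p2 \<and> \<eta> = (\<lambda>x. plane_wave k x * p2 x) \<and>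
    \<psi> = (\<lambda>x. plane_wave k x * (p1 x + complex_of_real x * p2 x))"
proof -
  obtain p2 where p2: "Cpg 2 \<gamma> p2" "\<eta> = (\<lambda>x. plane_wave k x * p2 x)"
    using floquet_factor[OF assms(2) \<eta>] by blast
  have "Cp 2 p2" and p2_periodic: "p2 (x + \<gamma>) = p2 x" for x
    using p2(1) by (simp_all add: Cpg_def)
  define p1 where "p1 = (\<lambda>x. 1 * (plane_wave (-k) x * \<psi> x) + (-1) * (complex_of_real x * p2 x))"
  have "Cp 2 p1"
    unfolding p1_def
    by (rule Cp2_lin(1)[OF Cp2_plane_wave_mult(1)[OF assms(1)] Cp2_linear_mult(1)[OF \<open>Cp 2 p2\<close>]])
  moreover have "p1 (x + \<gamma>) = p1 x" for x
  proof -
    have "p1 (x + \<gamma>) = plane_wave (-k) x * (plane_wave (-k) \<gamma> * plane_wave k \<gamma>) *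
        (\<psi> x + complex_of_real \<gamma> * (plane_wave k x * p2 x)) - complex_of_real (x + \<gamma>) * p2 x"
      unfolding p1_def \<psi> plane_wave_add p2_periodic p2(2) by (simp add: algebra_simps)
    also have "\<dots> = p1 x"
      unfolding plane_wave_neg p1_def using plane_wave_cancel[of "-k" x p2] by (simp add: algebra_simps)
    finally show ?thesis .
  qed
  ultimately have "Cpg 2 \<gamma> p1" by (simp add: Cpg_def)
  moreover have "\<psi> = (\<lambda>x. plane_wave k x * (p1 x + complex_of_real x * p2 x))"
    by (simp add: p1_def plane_wave_cancel)
  ultimately show ?thesis using p2 by blast
qed

lemma formA_iff: "formA \<gamma> k \<psi> \<longleftrightarrow> (\<exists>p. Cpg 2 \<gamma> p \<and> \<psi> = (\<lambda>x. plane_wave k x * p x))"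
  by (simp add: formA_def plane_wave_def)

lemma formB_iff: "formB \<gamma> k \<psi> \<longleftrightarrow> (\<exists>p1 p2. Cpg 2 \<gamma> p1 \<and> Cpg 2 \<gamma> p2 \<and> p2 \<noteq> (\<lambda>x. 0) \<and>
    \<psi> = (\<lambda>x. plane_wave k x * (p1 x + complex_of_real x * p2 x)))"
  by (simp add: formB_def plane_wave_def)

lemma formC_iff: "formC \<gamma> k1 k2 \<psi> \<longleftrightarrow> (\<exists>p1 p2. Cpg 2 \<gamma> p1 \<and> Cpg 2 \<gamma> p2 \<and>
    p1 \<noteq> (\<lambda>x. 0) \<and> p2 \<noteq> (\<lambda>x. 0) \<and> cls \<gamma> k1 \<noteq> cls \<gamma> k2 \<and>
    \<psi> = (\<lambda>x. plane_wave k1 x * p1 x + plane_wave k2 x * p2 x))"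
  by (simp add: formC_def plane_wave_def)

lemma QM_I:
  shows "\<psi> \<noteq> (\<lambda>x. 0) \<Longrightarrow> formA \<gamma> k \<psi> \<Longrightarrow> k \<in> QM \<gamma> \<psi>"
    and "formB \<gamma> k \<psi> \<Longrightarrow> k \<in> QM \<gamma> \<psi>"
    and "formC \<gamma> k1 k2 \<psi> \<Longrightarrow> k1 \<in> QM \<gamma> \<psi>"
    and "formC \<gamma> k1 k2 \<psi> \<Longrightarrow> k2 \<in> QM \<gamma> \<psi>"
  unfolding QM_def by blast+

lemma cls_in_Aset: "\<psi> \<in> Eig W V lam \<Longrightarrow> k \<in> QM \<gamma> \<psi> \<Longrightarrow> cls \<gamma> k \<in> Aset \<gamma> W V lam"
  unfolding Aset_def by blast

lemma floquet_shift:
  assumes "Cpg 2 \<gamma> p"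
  shows "plane_wave k (x + \<gamma>) * p (x + \<gamma>) = plane_wave k \<gamma> * (plane_wave k x * p x)"
  using assms by (simp add: Cpg_def plane_wave_add)

lemma jordan_floquet_shift:
  assumes "Cpg 2 \<gamma> p1" "Cpg 2 \<gamma> p2"
  shows "plane_wave k (x + \<gamma>) * (p1 (x + \<gamma>) + complex_of_real (x + \<gamma>) * p2 (x + \<gamma>)) =
    plane_wave k \<gamma> * (plane_wave k x * (p1 x + complex_of_real x * p2 x) +
      complex_of_real \<gamma> * (plane_wave k x * p2 x))"
proof -
  have "p1 (x + \<gamma>) = p1 x" "p2 (x + \<gamma>) = p2 x"
    using assms by (simp_all add: Cpg_def)
  then show ?thesis by (simp add: plane_wave_add algebra_simps)
qed

lemma formC_if_floquet_pair:
  assumes "\<gamma> > 0" and "Cp 2 \<phi>" "Cp 2 \<theta>" "\<phi> \<noteq> (\<lambda>x. 0)" "\<theta> \<noteq> (\<lambda>x. 0)"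
    and "\<And>x. \<phi> (x + \<gamma>) = plane_wave k \<gamma> * \<phi> x" "\<And>x. \<theta> (x + \<gamma>) = plane_wave k' \<gamma> * \<theta> x"
    and "plane_wave k \<gamma> \<noteq> plane_wave k' \<gamma>"
  shows "formC \<gamma> k k' (\<lambda>x. \<phi> x + \<theta> x)"
proof -
  obtain p where p: "Cpg 2 \<gamma> p" "\<phi> = (\<lambda>x. plane_wave k x * p x)"
    using floquet_factor[OF assms(2,6)] by blast
  obtain q where q: "Cpg 2 \<gamma> q" "\<theta> = (\<lambda>x. plane_wave k' x * q x)"
    using floquet_factor[OF assms(3,7)] by blast
  show ?thesis
    unfolding formC_iff cls_eq_iff[OF assms(1)]
    using p q assms(4,5,8) by (intro exI[of _ p] exI[of _ q]) auto
qed

section \<open>Translation by the period\<close>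

locale floquet =
  fixes \<gamma> :: real and W V :: "real \<Rightarrow> complex" and lam :: real
  assumes period_pos: "\<gamma> > 0" and PC_W: "PC W" and PC_V: "PC V"
    and W_periodic: "\<And>x. W (x + \<gamma>) = W x" and V_periodic: "\<And>x. V (x + \<gamma>) = V x"
begin

lemma Eig_translate_period: "f \<in> Eig W V lam \<Longrightarrow> (\<lambda>x. f (x + \<gamma>)) \<in> Eig W V lam"
  using Eig_translate W_periodic V_periodic by blast

lemma Eig_floquet_component:
  assumes \<phi>: "\<phi> \<in> Eig W V lam" and split: "\<And>x. \<phi> x = c1 x + c2 x"
    and c1: "\<And>x. c1 (x + \<gamma>) = \<mu>1 * c1 x" and c2: "\<And>x. c2 (x + \<gamma>) = \<mu>2 * c2 x"
    and "\<mu>1 \<noteq> \<mu>2"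
  shows "c1 \<in> Eig W V lam"
proof -
  have "(\<lambda>x. (1 / (\<mu>1 - \<mu>2)) * \<phi> (x + \<gamma>) + (- \<mu>2 / (\<mu>1 - \<mu>2)) * \<phi> x) \<in> Eig W V lam"
    by (rule Eig_lin[OF Eig_translate_period[OF \<phi>] \<phi>])
  also have "(\<lambda>x. (1 / (\<mu>1 - \<mu>2)) * \<phi> (x + \<gamma>) + (- \<mu>2 / (\<mu>1 - \<mu>2)) * \<phi> x) = c1"
  proof
    fix x
    have "(1 / (\<mu>1 - \<mu>2)) * \<phi> (x + \<gamma>) + (- \<mu>2 / (\<mu>1 - \<mu>2)) * \<phi> x =
        ((\<mu>1 - \<mu>2) * c1 x) / (\<mu>1 - \<mu>2)"
      unfolding split c1 c2 by (simp add: diff_divide_distrib add_divide_distrib algebra_simps)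
    then show "(1 / (\<mu>1 - \<mu>2)) * \<phi> (x + \<gamma>) + (- \<mu>2 / (\<mu>1 - \<mu>2)) * \<phi> x = c1 x"
      using \<open>\<mu>1 \<noteq> \<mu>2\<close> by simp
  qed
  finally show ?thesis .
qed

lemma Eig_jordan_component:
  assumes \<phi>: "\<phi> \<in> Eig W V lam" and "\<mu> \<noteq> 0"
    and "\<And>x. \<phi> (x + \<gamma>) = \<mu> * (\<phi> x + complex_of_real \<gamma> * \<eta> x)"
  shows "\<eta> \<in> Eig W V lam"
proof -
  have "(\<lambda>x. (1 / (\<mu> * complex_of_real \<gamma>)) * \<phi> (x + \<gamma>) + (- 1 / complex_of_real \<gamma>) * \<phi> x)
      \<in> Eig W V lam"
    by (rule Eig_lin[OF Eig_translate_period[OF \<phi>] \<phi>])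
  also have "(\<lambda>x. (1 / (\<mu> * complex_of_real \<gamma>)) * \<phi> (x + \<gamma>) + (- 1 / complex_of_real \<gamma>) * \<phi> x) = \<eta>"
    using assms(2,3) period_pos by (simp add: fun_eq_iff field_simps)
  finally show ?thesis .
qed

lemma wronskian_nonzero_if_multipliers_differ:
  assumes f: "f \<in> Eig W V lam" "f \<noteq> (\<lambda>x. 0)" "\<And>x. f (x + \<gamma>) = \<mu>1 * f x"
    and g: "g \<in> Eig W V lam" "g \<noteq> (\<lambda>x. 0)" "\<And>x. g (x + \<gamma>) = \<mu>2 * g x"
    and "\<mu>1 \<noteq> \<mu>2"
  shows "wronskian f g 0 \<noteq> 0"
proof
  assume "wronskian f g 0 = 0"
  then obtain c where c: "g = (\<lambda>x. c * f x)"
    using Eig_proportional_if_wronskian_zero[OF PC_W PC_V f(1) g(1) f(2)] by blast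
  have "(\<mu>1 - \<mu>2) * g x = 0" for x
    using g(3)[of x] unfolding c f(3) by (simp add: algebra_simps)
  then show False using g(2) \<open>\<mu>1 \<noteq> \<mu>2\<close> by (auto simp: fun_eq_iff)
qed

lemma wronskian_nonzero_if_jordan:
  assumes f: "f \<in> Eig W V lam" "f \<noteq> (\<lambda>x. 0)" "\<And>x. f (x + \<gamma>) = \<mu> * f x"
    and g: "g \<in> Eig W V lam" "\<And>x. g (x + \<gamma>) = \<mu> * (g x + complex_of_real \<gamma> * f x)"
    and "\<mu> \<noteq> 0"
  shows "wronskian f g 0 \<noteq> 0"
proof
  assume "wronskian f g 0 = 0"
  then obtain c where c: "g = (\<lambda>x. c * f x)"
    using Eig_proportional_if_wronskian_zero[OF PC_W PC_V f(1) g(1) f(2)] by blast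
  have "\<mu> * complex_of_real \<gamma> * f x = 0" for x
    using g(2)[of x] unfolding c f(3) by (simp add: algebra_simps)
  then show False using f(2) \<open>\<mu> \<noteq> 0\<close> period_pos by (auto simp: fun_eq_iff)
qed

lemma Eig_second_multiplier:
  assumes \<phi>: "\<phi> \<in> Eig W V lam" "\<And>x. \<phi> (x + \<gamma>) = \<mu> * \<phi> x"
    and \<psi>: "\<psi> \<in> Eig W V lam" "\<And>x. \<psi> (x + \<gamma>) = a * \<phi> x + b * \<psi> x"
    and "wronskian \<phi> \<psi> 0 \<noteq> 0" and "b \<noteq> \<mu>"
  shows "\<exists>\<theta>. \<theta> \<in> Eig W V lam \<and> \<theta> \<noteq> (\<lambda>x. 0) \<and> (\<forall>x. \<theta> (x + \<gamma>) = b * \<theta> x)"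
proof (intro exI conjI allI)
  define \<theta> where "\<theta> = (\<lambda>x. 1 * \<psi> x + (a / (b - \<mu>)) * \<phi> x)"
  show "\<theta> \<in> Eig W V lam" unfolding \<theta>_def by (rule Eig_lin[OF \<psi>(1) \<phi>(1)])
  show "\<theta> (x + \<gamma>) = b * \<theta> x" for x
    using \<open>b \<noteq> \<mu>\<close> unfolding \<theta>_def \<psi>(2) \<phi>(2) by (simp add: field_simps)
  show "\<theta> \<noteq> (\<lambda>x. 0)"
  proof
    assume "\<theta> = (\<lambda>x. 0)"
    then have "\<psi> = (\<lambda>x. (- (a / (b - \<mu>))) * \<phi> x)"
      by (auto simp: \<theta>_def fun_eq_iff eq_neg_iff_add_eq_0)
    then show False
      using assms(5) wronskian_scale_self[OF Eig_Cp2[OF \<phi>(1)], of "- (a / (b - \<mu>))" 0] by simp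
  qed
qed

text \<open>In a basis phi, psi with phi a Floquet solution the translation has a triangular matrix,
  so it is the scalar mu, a Jordan block, or has a second eigenvalue.\<close>

lemma Eig_floquet_cases:
  assumes \<phi>: "\<phi> \<in> Eig W V lam" "\<phi> \<noteq> (\<lambda>x. 0)" "\<And>x. \<phi> (x + \<gamma>) = \<mu> * \<phi> x"
    and \<psi>: "\<psi> \<in> Eig W V lam"
  obtains "\<And>x. \<psi> (x + \<gamma>) = \<mu> * \<psi> x"
  | \<eta> where "\<eta> \<in> Eig W V lam" "\<eta> \<noteq> (\<lambda>x. 0)" "\<And>x. \<eta> (x + \<gamma>) = \<mu> * \<eta> x"
      "\<And>x. \<psi> (x + \<gamma>) = \<mu> * (\<psi> x + complex_of_real \<gamma> * \<eta> x)"
  | \<theta> b where "\<theta> \<in> Eig W V lam" "\<theta> \<noteq> (\<lambda>x. 0)" "b \<noteq> \<mu>" "\<And>x. \<theta> (x + \<gamma>) = b * \<theta> x"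
proof (cases "wronskian \<phi> \<psi> 0 = 0")
  case True
  then obtain c where "\<psi> = (\<lambda>x. c * \<phi> x)"
    using Eig_proportional_if_wronskian_zero[OF PC_W PC_V \<phi>(1) \<psi> \<phi>(2)] by blast
  then show ?thesis using that(1) \<phi>(3) by (simp add: ac_simps)
next
  case False
  then obtain a b where "(\<lambda>x. \<psi> (x + \<gamma>)) = (\<lambda>x. a * \<phi> x + b * \<psi> x)"
    using Eig_span_if_wronskian_nonzero[OF PC_W PC_V \<phi>(1) \<psi> Eig_translate_period[OF \<psi>]] by blast
  then have T\<psi>: "\<psi> (x + \<gamma>) = a * \<phi> x + b * \<psi> x" for x by meson
  consider "b = \<mu>" "a = 0" | "b = \<mu>" "a \<noteq> 0" | "b \<noteq> \<mu>" by blast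
  then show ?thesis
  proof cases
    case 1
    then show ?thesis using that(1) T\<psi> by simp
  next
    case 2
    have "\<mu> \<noteq> 0" using floquet_multiplier_nonzero \<phi>(2,3) by blast
    define \<eta> where "\<eta> = (\<lambda>x. (a / (\<mu> * complex_of_real \<gamma>)) * \<phi> x)"
    have "\<eta> \<in> Eig W V lam" unfolding \<eta>_def by (rule Eig_scale[OF \<phi>(1)])
    moreover have "\<eta> \<noteq> (\<lambda>x. 0)"
      using \<phi>(2) 2 \<open>\<mu> \<noteq> 0\<close> period_pos by (auto simp: \<eta>_def fun_eq_iff)
    moreover have "\<eta> (x + \<gamma>) = \<mu> * \<eta> x" for x
      unfolding \<eta>_def \<phi>(3) by simp
    moreover have "\<psi> (x + \<gamma>) = \<mu> * (\<psi> x + complex_of_real \<gamma> * \<eta> x)" for x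
      using 2 \<open>\<mu> \<noteq> 0\<close> period_pos unfolding T\<psi> \<eta>_def by (simp add: field_simps)
    ultimately show ?thesis using that(2) by blast
  next
    case 3
    then show ?thesis
      using Eig_second_multiplier[OF \<phi>(1,3) \<psi> T\<psi> False] that(3) by blast
  qed
qed

lemma Eig_floquet_if_sigma1:
  assumes \<sigma>: "lam \<in> sigma1 \<gamma> W V" and A: "Aset \<gamma> W V lam = {cls \<gamma> k0}"
    and \<psi>: "\<psi> \<in> Eig W V lam"
  shows "\<psi> (x + \<gamma>) = plane_wave k0 \<gamma> * \<psi> x"
proof -
  have cls_k0: "cls \<gamma> k \<in> Aset \<gamma> W V lam \<Longrightarrow> plane_wave k \<gamma> = plane_wave k0 \<gamma>" for k
    using A cls_eq_iff[OF period_pos] by auto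
  obtain \<phi> k where \<phi>: "\<phi> \<in> Eig W V lam" "\<phi> \<noteq> (\<lambda>x. 0)" "formA \<gamma> k \<phi>"
    using \<sigma> unfolding sigma1_def by blast
  then have "plane_wave k \<gamma> = plane_wave k0 \<gamma>"
    by (intro cls_k0 cls_in_Aset QM_I)
  moreover obtain q where "Cpg 2 \<gamma> q" "\<phi> = (\<lambda>x. plane_wave k x * q x)"
    using \<phi>(3) unfolding formA_iff by blast
  ultimately have T\<phi>: "\<phi> (x + \<gamma>) = plane_wave k0 \<gamma> * \<phi> x" for x
    using floquet_shift by metis
  \<comment> \<open>A Jordan block would give a solution of form (b), a second multiplier a second class.\<close>
  from \<phi>(1,2) T\<phi> \<psi> show ?thesis
  proof (cases rule: Eig_floquet_cases)
    case (2 \<eta>)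
    then obtain p1 p2 where "Cpg 2 \<gamma> p1" "Cpg 2 \<gamma> p2" "\<eta> = (\<lambda>x. plane_wave k0 x * p2 x)"
        "\<psi> = (\<lambda>x. plane_wave k0 x * (p1 x + complex_of_real x * p2 x))"
      using jordan_floquet_factor[OF Eig_Cp2[OF \<psi>] Eig_Cp2] by blast
    then have "formB \<gamma> k0 \<psi>"
      unfolding formB_iff using \<open>\<eta> \<noteq> (\<lambda>x. 0)\<close> by auto
    then show ?thesis using \<sigma> \<psi> unfolding sigma1_def by blast
  next
    case (3 \<theta> b)
    obtain k' where k': "plane_wave k' \<gamma> = b"
      using plane_wave_surj[OF period_pos floquet_multiplier_nonzero[OF 3(2,4)]] by blast
    have "formC \<gamma> k0 k' (\<lambda>x. \<phi> x + \<theta> x)"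
      using 3 k' by (intro formC_if_floquet_pair period_pos Eig_Cp2[OF \<phi>(1)] Eig_Cp2[OF 3(1)] \<phi>(2) T\<phi>)
        auto
    moreover have "(\<lambda>x. \<phi> x + \<theta> x) \<in> Eig W V lam"
      using Eig_lin[OF \<phi>(1) 3(1), of 1 1] by simp
    ultimately have "plane_wave k' \<gamma> = plane_wave k0 \<gamma>"
      by (intro cls_k0 cls_in_Aset QM_I(4))
    then show ?thesis using 3 k' by simp
  qed
qed

lemma Eig_sigma1:
  assumes "lam \<in> sigma1 \<gamma> W V" and "Aset \<gamma> W V lam = {cls \<gamma> k0}"
  shows "Eig W V lam = {(\<lambda>x. plane_wave k0 x * p x) | p.
    Cpg 2 \<gamma> p \<and> Dk W V k0 p = (\<lambda>x. complex_of_real lam * p x)}"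
proof (intro set_eqI iffI)
  fix \<psi> assume \<psi>: "\<psi> \<in> Eig W V lam"
  moreover obtain p where "Cpg 2 \<gamma> p" "\<psi> = (\<lambda>x. plane_wave k0 x * p x)"
    using floquet_factor[OF Eig_Cp2[OF \<psi>] Eig_floquet_if_sigma1[OF assms \<psi>]] by blast
  ultimately show "\<psi> \<in> {(\<lambda>x. plane_wave k0 x * p x) | p.
      Cpg 2 \<gamma> p \<and> Dk W V k0 p = (\<lambda>x. complex_of_real lam * p x)}"
    using Eig_plane_wave_mult_iff[of p k0] by (auto simp: Cpg_def)
qed (auto simp: Cpg_def Eig_plane_wave_mult_iff)

lemma Eig_jordan_pair_if_sigma2:
  assumes \<sigma>: "lam \<in> sigma2 \<gamma> W V" and A: "Aset \<gamma> W V lam = {cls \<gamma> k0}"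
  obtains \<phi>1 \<phi> where "\<phi>1 \<in> Eig W V lam" "\<phi> \<in> Eig W V lam" "wronskian \<phi>1 \<phi> 0 \<noteq> 0"
    "\<And>x. \<phi>1 (x + \<gamma>) = plane_wave k0 \<gamma> * \<phi>1 x"
    "\<And>x. \<phi> (x + \<gamma>) = plane_wave k0 \<gamma> * (\<phi> x + complex_of_real \<gamma> * \<phi>1 x)"
proof -
  obtain \<phi> k where \<phi>: "\<phi> \<in> Eig W V lam" "formB \<gamma> k \<phi>"
    using \<sigma> unfolding sigma2_def by blast
  then have "cls \<gamma> k \<in> Aset \<gamma> W V lam" by (intro cls_in_Aset QM_I)
  then have \<mu>: "plane_wave k \<gamma> = plane_wave k0 \<gamma>"
    using A cls_eq_iff[OF period_pos] by auto
  obtain q1 q2 where q: "Cpg 2 \<gamma> q1" "Cpg 2 \<gamma> q2" "q2 \<noteq> (\<lambda>x. 0)"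
      "\<phi> = (\<lambda>x. plane_wave k x * (q1 x + complex_of_real x * q2 x))"
    using \<phi>(2) unfolding formB_iff by blast
  define \<phi>1 where "\<phi>1 = (\<lambda>x. plane_wave k x * q2 x)"
  have T\<phi>1: "\<phi>1 (x + \<gamma>) = plane_wave k0 \<gamma> * \<phi>1 x" for x
    unfolding \<phi>1_def \<mu>[symmetric] by (rule floquet_shift[OF q(2)])
  have T\<phi>: "\<phi> (x + \<gamma>) = plane_wave k0 \<gamma> * (\<phi> x + complex_of_real \<gamma> * \<phi>1 x)" for x
    unfolding q(4) \<phi>1_def \<mu>[symmetric] by (rule jordan_floquet_shift[OF q(1,2)])
  have \<phi>1: "\<phi>1 \<in> Eig W V lam" "\<phi>1 \<noteq> (\<lambda>x. 0)"
    using Eig_jordan_component[OF \<phi>(1) _ T\<phi>] q(3) by (simp_all add: \<phi>1_def)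
  have "wronskian \<phi>1 \<phi> 0 \<noteq> 0"
    by (rule wronskian_nonzero_if_jordan[OF \<phi>1 T\<phi>1 \<phi>(1) T\<phi>]) simp
  with \<phi>1 \<phi>(1) T\<phi>1 T\<phi> show ?thesis using that by blast
qed

lemma Eig_sigma2:
  assumes "lam \<in> sigma2 \<gamma> W V" and "Aset \<gamma> W V lam = {cls \<gamma> k0}"
  shows "Eig W V lam = {(\<lambda>x. plane_wave k0 x * (p1 x + complex_of_real x * p2 x)) | p1 p2.
    Cpg 2 \<gamma> p1 \<and> Cpg 2 \<gamma> p2 \<and> Dk W V k0 p2 = (\<lambda>x. complex_of_real lam * p2 x) \<and>
    Dk W V k0 p1 = (\<lambda>x. complex_of_real lam * p1 x + (2 * \<i> * k0 - W x) * p2 x + 2 * D1 p2 x)}"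
    (is "_ = ?S")
proof (intro set_eqI iffI)
  fix \<psi> assume \<psi>: "\<psi> \<in> Eig W V lam"
  obtain \<phi>1 \<phi> where \<phi>: "\<phi>1 \<in> Eig W V lam" "\<phi> \<in> Eig W V lam" "wronskian \<phi>1 \<phi> 0 \<noteq> 0"
      "\<And>x. \<phi>1 (x + \<gamma>) = plane_wave k0 \<gamma> * \<phi>1 x"
      "\<And>x. \<phi> (x + \<gamma>) = plane_wave k0 \<gamma> * (\<phi> x + complex_of_real \<gamma> * \<phi>1 x)"
    using Eig_jordan_pair_if_sigma2[OF assms] by blast
  obtain a b where ab: "\<psi> = (\<lambda>x. a * \<phi>1 x + b * \<phi> x)"
    using Eig_span_if_wronskian_nonzero[OF PC_W PC_V \<phi>(1,2) \<psi> \<phi>(3)] by blast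
  define \<eta> where "\<eta> = (\<lambda>x. b * \<phi>1 x)"
  have \<eta>: "\<eta> \<in> Eig W V lam" unfolding \<eta>_def by (rule Eig_scale[OF \<phi>(1)])
  have "\<eta> (x + \<gamma>) = plane_wave k0 \<gamma> * \<eta> x"
    and "\<psi> (x + \<gamma>) = plane_wave k0 \<gamma> * (\<psi> x + complex_of_real \<gamma> * \<eta> x)" for x
    unfolding \<eta>_def ab \<phi>(4,5) by (simp_all add: algebra_simps)
  then obtain p1 p2 where p: "Cpg 2 \<gamma> p1" "Cpg 2 \<gamma> p2" "\<eta> = (\<lambda>x. plane_wave k0 x * p2 x)"
      "\<psi> = (\<lambda>x. plane_wave k0 x * (p1 x + complex_of_real x * p2 x))"
    using jordan_floquet_factor[OF Eig_Cp2[OF \<psi>] Eig_Cp2[OF \<eta>]] by blast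
  have C: "Cp 2 p1" "Cp 2 p2" using p(1,2) by (simp_all add: Cpg_def)
  have Dk2: "Dk W V k0 p2 = (\<lambda>x. complex_of_real lam * p2 x)"
    using \<eta> unfolding p(3) Eig_plane_wave_mult_iff[OF C(2)] .
  moreover have "Dk W V k0 p1 =
      (\<lambda>x. complex_of_real lam * p1 x + (2 * \<i> * k0 - W x) * p2 x + 2 * D1 p2 x)"
    using \<psi> unfolding p(4) Eig_plane_wave_jordan_iff[OF C Dk2] .
  ultimately show "\<psi> \<in> ?S"
    using p(1,2,4) by auto
next
  fix \<psi> assume "\<psi> \<in> ?S"
  then obtain p1 p2 where p: "Cpg 2 \<gamma> p1" "Cpg 2 \<gamma> p2"
      "Dk W V k0 p2 = (\<lambda>x. complex_of_real lam * p2 x)"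
      "Dk W V k0 p1 = (\<lambda>x. complex_of_real lam * p1 x + (2 * \<i> * k0 - W x) * p2 x + 2 * D1 p2 x)"
      "\<psi> = (\<lambda>x. plane_wave k0 x * (p1 x + complex_of_real x * p2 x))"
    by blast
  then show "\<psi> \<in> Eig W V lam"
    using Eig_plane_wave_jordan_iff[of p1 p2 W V k0 lam] by (simp add: Cpg_def)
qed

lemma Eig_sigma3:
  assumes \<sigma>: "lam \<in> sigma3 \<gamma> W V"
  shows "Eig W V lam = cspan {(\<lambda>x. plane_wave k x * p x) | k p.
    Dk W V k p = (\<lambda>x. complex_of_real lam * p x) \<and> cls \<gamma> k \<in> Aset \<gamma> W V lam \<and>
    card (Aset \<gamma> W V lam) = 2 \<and> Cpg 2 \<gamma> p}" (is "_ = cspan ?S")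
proof -
  obtain \<phi> k1 k2 where \<phi>: "\<phi> \<in> Eig W V lam" "formC \<gamma> k1 k2 \<phi>"
    and card: "card (Aset \<gamma> W V lam) = 2"
    using \<sigma> unfolding sigma3_def by blast
  then obtain p1 p2 where p: "Cpg 2 \<gamma> p1" "Cpg 2 \<gamma> p2" "p1 \<noteq> (\<lambda>x. 0)" "p2 \<noteq> (\<lambda>x. 0)"
      "cls \<gamma> k1 \<noteq> cls \<gamma> k2" "\<phi> = (\<lambda>x. plane_wave k1 x * p1 x + plane_wave k2 x * p2 x)"
    unfolding formC_iff by blast
  have A: "cls \<gamma> k1 \<in> Aset \<gamma> W V lam" "cls \<gamma> k2 \<in> Aset \<gamma> W V lam"
    using \<phi> by (auto intro: cls_in_Aset QM_I)
  define c1 where "c1 = (\<lambda>x. plane_wave k1 x * p1 x)"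
  define c2 where "c2 = (\<lambda>x. plane_wave k2 x * p2 x)"
  have \<mu>: "plane_wave k1 \<gamma> \<noteq> plane_wave k2 \<gamma>"
    using p(5) cls_eq_iff[OF period_pos] by simp
  have T: "c1 (x + \<gamma>) = plane_wave k1 \<gamma> * c1 x" "c2 (x + \<gamma>) = plane_wave k2 \<gamma> * c2 x" for x
    unfolding c1_def c2_def by (intro floquet_shift p(1,2))+
  have split: "\<phi> x = c1 x + c2 x" "\<phi> x = c2 x + c1 x" for x
    by (simp_all add: p(6) c1_def c2_def)
  have c1: "c1 \<in> Eig W V lam"
    by (rule Eig_floquet_component[OF \<phi>(1) split(1) T \<mu>])
  have c2: "c2 \<in> Eig W V lam"
    by (rule Eig_floquet_component[OF \<phi>(1) split(2) T(2,1) \<mu>[symmetric]])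
  have "c1 \<noteq> (\<lambda>x. 0)" "c2 \<noteq> (\<lambda>x. 0)"
    using p(3,4) by (simp_all add: c1_def c2_def)
  then have "wronskian c1 c2 0 \<noteq> 0"
    using wronskian_nonzero_if_multipliers_differ[OF c1 _ T(1) c2 _ T(2) \<mu>] by blast
  moreover have "c1 \<in> ?S" "c2 \<in> ?S"
    using c1 c2 p(1,2) A card unfolding c1_def c2_def
    by (auto simp: Cpg_def Eig_plane_wave_mult_iff)
  moreover have "?S \<subseteq> Eig W V lam"
    by (auto simp: Cpg_def Eig_plane_wave_mult_iff)
  ultimately show ?thesis
    using Eig_eq_cspan_if_wronskian_nonzero[OF PC_W PC_V] by blast
qed

end

theorem theorem3p5:
  fixes \<gamma> :: real and W V :: "real \<Rightarrow> complex"
  assumes "\<gamma> > 0" and "Cpg 0 \<gamma> W" and "Cpg 0 \<gamma> V"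
  shows "(\<forall>lam k0. lam \<in> sigma1 \<gamma> W V \<and> Aset \<gamma> W V lam = {cls \<gamma> k0} \<longrightarrow>
            Eig W V lam = {(\<lambda>x. exp (\<i> * k0 * complex_of_real x) * p x) | p.
                Cpg 2 \<gamma> p \<and> Dk W V k0 p = (\<lambda>x. complex_of_real lam * p x)})
       \<and> (\<forall>lam k0. lam \<in> sigma2 \<gamma> W V \<and> Aset \<gamma> W V lam = {cls \<gamma> k0} \<longrightarrow>
            Eig W V lam = {(\<lambda>x. exp (\<i> * k0 * complex_of_real x) * (p1 x + complex_of_real x * p2 x)) | p1 p2.
                Cpg 2 \<gamma> p1 \<and> Cpg 2 \<gamma> p2 \<and>
                Dk W V k0 p2 = (\<lambda>x. complex_of_real lam * p2 x) \<and>
                Dk W V k0 p1 = (\<lambda>x. complex_of_real lam * p1 x + (2 * \<i> * k0 - W x) * p2 x + 2 * D1 p2 x)})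
       \<and> (\<forall>lam. lam \<in> sigma3 \<gamma> W V \<longrightarrow>
            Eig W V lam = cspan {(\<lambda>x. exp (\<i> * k * complex_of_real x) * p x) | k p.
                Dk W V k p = (\<lambda>x. complex_of_real lam * p x) \<and> cls \<gamma> k \<in> Aset \<gamma> W V lam \<and>
                card (Aset \<gamma> W V lam) = 2 \<and> Cpg 2 \<gamma> p})"
proof -
  have "floquet \<gamma> W V"
    using assms by unfold_locales (auto simp: Cpg_def)
  note sigma1 = floquet.Eig_sigma1[OF this, unfolded plane_wave_def]
   and sigma2 = floquet.Eig_sigma2[OF this, unfolded plane_wave_def]
   and sigma3 = floquet.Eig_sigma3[OF this, unfolded plane_wave_def]
  show ?thesis
    by (intro conjI allI impI; (elim conjE)?) (rule sigma1 sigma2 sigma3; assumption)+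
qed

end
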